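(* Let $G_1,\dots,G_K$ be a partition of $[n]$ with $n_k=|G_k|\ge1$, and let $U_1^\ast\in\mathbb R^{n\times K}$ have $k$-th column $\frac{1}{\sqrt{n_k}}\mathbf 1_{G_k}$. There exists $R_3>0$ such that for every $\Delta_1\in\mathbb R^{n\times K}$ satisfying $(U_1^\ast)_{ij}=0\Rightarrow(\Delta_1)_{ij}=0$, $$\|\Delta_1(U_1^\ast)^T\mathbf 1_n+U_1^\ast\Delta_1^T\mathbf 1_n\|_F^2\ge R_3\|\Delta_1\|_F^2.$$
   Context: $\mathbf 1_{G_k}\in\mathbb R^n$ is the indicator vector of $G_k$ and $\mathbf 1_n$ the all-ones vector. *)

theory Defs
  imports "HOL-Analysis.Analysis"
begin

definition frob_norm :: "real ^ 'k ^ 'n \<Rightarrow> real" where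
  "frob_norm A = sqrt (\<Sum>i\<in>UNIV. \<Sum>j\<in>UNIV. (A $ i $ j)\<^sup>2)"

definition indicator_vec :: "'n set \<Rightarrow> real ^ 'n" where
  "indicator_vec S = (\<chi> i. if i \<in> S then 1 else 0)"

definition Ustar :: "('k \<Rightarrow> 'n set) \<Rightarrow> real ^ 'k ^ 'n" where
  "Ustar G = (\<chi> i j. (1 / sqrt (real (card (G j)))) * (indicator_vec (G j) $ i))"

end

theory Submission
  imports Defs
begin

text \<open>
  With \<open>c = U\<^sup>T 1 = (sqrt n\<^sub>k)\<^sub>k\<close> and \<open>s = \<Delta>\<^sup>T 1\<close> the vector in question is \<open>\<Delta> c + U s\<close>.
  A matrix supported on the support of \<open>U\<close> has at most one nonzero entry per row, so
  \<open>\<parallel>\<Delta> c\<parallel>\<^sup>2 \<ge> min\<^sub>k n\<^sub>k \<parallel>\<Delta>\<parallel>\<^sub>F\<^sup>2 \<ge> \<parallel>\<Delta>\<parallel>\<^sub>F\<^sup>2\<close>, and \<open>\<Delta>\<^sup>T U\<close> is the diagonal matrix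
  \<open>diag (s\<^sub>k / c\<^sub>k)\<close>, so the cross term \<open>\<langle>\<Delta> c, U s\<rangle> = \<Sigma>\<^sub>k s\<^sub>k\<^sup>2\<close> is nonnegative.
  Hence \<open>R\<^sub>3 = 1\<close> works.
\<close>

lemma frob_norm_squared: "(frob_norm A)\<^sup>2 = (\<Sum>i\<in>UNIV. \<Sum>j\<in>UNIV. (A $ i $ j)\<^sup>2)"
  unfolding frob_norm_def by (simp add: sum_nonneg)

lemma frob_norm_squared_le_norm_matrix_vector_mult:
  fixes A :: "real ^ 'k ^ 'n" and x :: "real ^ 'k"
  assumes single_entry_rows: "\<And>i. \<exists>k. \<forall>j. j \<noteq> k \<longrightarrow> A $ i $ j = 0"
    and large: "\<And>j. 1 \<le> \<bar>x $ j\<bar>"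
  shows "(frob_norm A)\<^sup>2 \<le> (norm (A *v x))\<^sup>2"
proof -
  have row: "(\<Sum>j\<in>UNIV. (A $ i $ j)\<^sup>2) \<le> ((A *v x) $ i)\<^sup>2" for i
  proof -
    obtain k where k: "\<And>j. j \<noteq> k \<Longrightarrow> A $ i $ j = 0"
      using single_entry_rows by blast
    have "(\<Sum>j\<in>UNIV. (A $ i $ j)\<^sup>2) = (A $ i $ k)\<^sup>2"
      using k by (subst sum.remove[of UNIV k]) auto
    also have "\<dots> \<le> (A $ i $ k)\<^sup>2 * (x $ k)\<^sup>2"
      using large[of k] by (simp add: mult_le_cancel_left1 abs_le_square_iff[of 1, simplified])
    also have "\<dots> = ((A *v x) $ i)\<^sup>2"
      using k by (simp add: matrix_vector_mult_def sum.remove[of UNIV k] power_mult_distrib)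
    finally show ?thesis .
  qed
  have "(norm (A *v x))\<^sup>2 = (\<Sum>i\<in>UNIV. ((A *v x) $ i)\<^sup>2)"
    unfolding power2_norm_eq_inner inner_vec_def by (simp add: power2_eq_square)
  with row show ?thesis
    unfolding frob_norm_squared by (simp add: sum_mono)
qed

lemma Ustar_eq_0: "i \<notin> G j \<Longrightarrow> Ustar G $ i $ j = 0"
  by (simp add: Ustar_def indicator_vec_def)

lemma transpose_Ustar_mult_ones:
  "transpose (Ustar G) *v vec 1 = (\<chi> j. sqrt (real (card (G j))))"
proof -
  have "(\<Sum>i\<in>UNIV. Ustar G $ i $ j) = real (card (G j)) / sqrt (real (card (G j)))" for j
    by (simp add: Ustar_def indicator_vec_def sum.If_cases flip: sum_divide_distrib)
  then have "(\<Sum>i\<in>UNIV. Ustar G $ i $ j) = sqrt (real (card (G j)))" for j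
    by (simp add: real_div_sqrt)
  then show ?thesis
    by (simp add: vec_eq_iff matrix_vector_mult_def transpose_def)
qed

context
  fixes G :: "'k::finite \<Rightarrow> 'n::finite set" and \<Delta> :: "real ^ 'k ^ 'n"
  assumes disj: "\<And>k l. k \<noteq> l \<Longrightarrow> G k \<inter> G l = {}"
    and supported: "\<And>i j. i \<notin> G j \<Longrightarrow> \<Delta> $ i $ j = 0"
begin

lemma block_supported_single_entry_rows: "\<exists>k. \<forall>j. j \<noteq> k \<longrightarrow> \<Delta> $ i $ j = 0"
  using disj supported by (cases "\<exists>k. i \<in> G k") blast+

lemma transpose_mult_Ustar_mult:
  "transpose \<Delta> *v (Ustar G *v y) =
     (\<chi> j. (transpose \<Delta> *v vec 1) $ j / sqrt (real (card (G j))) * y $ j)"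
proof -
  have entry: "\<Delta> $ i $ j * (Ustar G *v y) $ i = \<Delta> $ i $ j / sqrt (real (card (G j))) * y $ j"
    for i j
  proof (cases "i \<in> G j")
    case True
    then have "\<And>l. l \<noteq> j \<Longrightarrow> Ustar G $ i $ l = 0"
      using disj by (blast intro: Ustar_eq_0)
    then have "(Ustar G *v y) $ i = Ustar G $ i $ j * y $ j"
      by (simp add: matrix_vector_mult_def sum.remove[of UNIV j])
    with True show ?thesis
      by (simp add: Ustar_def indicator_vec_def)
  qed (simp add: supported)
  have component: "(transpose \<Delta> *v w) $ j = (\<Sum>i\<in>UNIV. \<Delta> $ i $ j * w $ i)" for w j
    by (simp add: matrix_vector_mult_def transpose_def del: transpose_matrix_vector)
  show ?thesis
    by (simp add: vec_eq_iff component entry sum_divide_distrib sum_distrib_right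
        del: transpose_matrix_vector)
qed

lemma inner_cross_term_nonneg:
  "0 \<le> inner (\<Delta> *v (transpose (Ustar G) *v vec 1)) (Ustar G *v (transpose \<Delta> *v vec 1))"
proof -
  define c :: "real ^ 'k" where "c = (\<chi> j. sqrt (real (card (G j))))"
  define s where "s = transpose \<Delta> *v vec 1"
  have "inner (\<Delta> *v c) (Ustar G *v s) = inner c (transpose \<Delta> *v (Ustar G *v s))"
    by (metis dot_lmul_matrix vector_transpose_matrix)
  also have "\<dots> = (\<Sum>j\<in>UNIV. sqrt (real (card (G j))) * (s $ j / sqrt (real (card (G j))) * s $ j))"
    unfolding transpose_mult_Ustar_mult inner_vec_def c_def s_def by simp
  also have "\<dots> \<ge> 0"
    by (intro sum_nonneg) (simp add: zero_le_mult_iff zero_le_divide_iff)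
  finally show ?thesis
    unfolding s_def c_def transpose_Ustar_mult_ones .
qed

end

theorem lemma17:
  fixes G :: "'k::finite \<Rightarrow> 'n::finite set"
  assumes disj: "\<And>k l. k \<noteq> l \<Longrightarrow> G k \<inter> G l = {}"
    and cover: "(\<Union>k. G k) = UNIV"
    and nonempty: "\<And>k. card (G k) \<ge> 1"
  shows "\<exists>R3 > 0. \<forall>\<Delta> :: real ^ 'k ^ 'n.
           (\<forall>i j. Ustar G $ i $ j = 0 \<longrightarrow> \<Delta> $ i $ j = 0) \<longrightarrow>
           (norm ((\<Delta> ** transpose (Ustar G)) *v vec 1 + (Ustar G ** transpose \<Delta>) *v vec 1))\<^sup>2
             \<ge> R3 * (frob_norm \<Delta>)\<^sup>2"
proof (intro exI[of _ 1] conjI allI impI)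
  fix \<Delta> :: "real ^ 'k ^ 'n"
  assume "\<forall>i j. Ustar G $ i $ j = 0 \<longrightarrow> \<Delta> $ i $ j = 0"
  then have supported: "\<And>i j. i \<notin> G j \<Longrightarrow> \<Delta> $ i $ j = 0"
    by (simp add: Ustar_eq_0)
  define a where "a = \<Delta> *v (transpose (Ustar G) *v vec 1)"
  define b where "b = Ustar G *v (transpose \<Delta> *v vec 1)"
  have "(frob_norm \<Delta>)\<^sup>2 \<le> (norm a)\<^sup>2"
    unfolding a_def transpose_Ustar_mult_ones
    using block_supported_single_entry_rows[of G \<Delta>, OF disj supported] nonempty
    by (intro frob_norm_squared_le_norm_matrix_vector_mult) auto
  also have "\<dots> \<le> (norm a)\<^sup>2 + 2 * inner a b + (norm b)\<^sup>2"
    using inner_cross_term_nonneg[of G \<Delta>, OF disj supported] unfolding a_def b_def by simp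
  also have "\<dots> = (norm (a + b))\<^sup>2"
    unfolding power2_norm_eq_inner by (simp add: inner_add inner_commute)
  finally show "1 * (frob_norm \<Delta>)\<^sup>2 \<le>
      (norm ((\<Delta> ** transpose (Ustar G)) *v vec 1 + (Ustar G ** transpose \<Delta>) *v vec 1))\<^sup>2"
    by (simp add: a_def b_def flip: matrix_vector_mul_assoc)
qed simp

end
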